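(* Let $X$ be a locally compact Hausdorff space and consider a commutative square of pointed extensions of $X$ with $X_+\to X''_\ast$, $X_+\to X'_\ast$, $X''_\ast\to X^+$, $X'_\ast\to X^+$. If this square is simultaneously a pullback and a pushout in the category of compactly generated Hausdorff spaces, then the canonical relations $X'_\ast\to(X''_\ast)^\neg$ and $X''_\ast\to(X'_\ast)^\neg$ are the universal relations to the well-pointed replacements; i.e. $(X''_\ast)^\neg=(X'_\ast)^{\neg\neg}$ and $(X'_\ast)^\neg=(X''_\ast)^{\neg\neg}$ via these relations.
   Context: A pointed extension of $X$ is a compactly generated Hausdorff topology on $\ast\amalg X$ extending that of $X$; they form a poset with $X_\ast\le X'_\ast$ (a "relation" $X_\ast\to X'_\ast$) iff the identity map is continuous; $X_+$ (disjoint basepoint) is initial and $X^+$ (one-point compactification) is final. The negation $X_\ast^\neg$ is the final pointed extension $X'_\ast$ for which $X_+\to X_\ast\times_{X^+}X'_\ast$ is a homeomorphism. There is a canonical relation $X_\ast\to X_\ast^{\neg\neg}$; $X_\ast$ is well-pointed if it is an equality, and $X_\ast\to X_\ast^{\neg\neg}$ is the well-pointed replacement (left adjoint to the inclusion of well-pointed extensions). *)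

theory Defs
  imports "HOL-Analysis.Analysis"
begin

text \<open>Pointed extensions of a space X: topologies on the carrier
  None (the basepoint) plus Some ` topspace X, compactly generated Hausdorff,
  restricting to the topology of X along Some.\<close>

definition pt_carrier :: "'a topology \<Rightarrow> 'a option set" where
  "pt_carrier X = insert None (Some ` topspace X)"

definition CGH_space :: "'b topology \<Rightarrow> bool" where
  "CGH_space Z \<longleftrightarrow> Hausdorff_space Z \<and> k_space Z"

definition pointed_ext :: "'a topology \<Rightarrow> 'a option topology \<Rightarrow> bool" where
  "pointed_ext X T \<longleftrightarrow> topspace T = pt_carrier X \<and> CGH_space T \<and> embedding_map X T Some"

text \<open>A relation T1 \<rightarrow> T2: the identity map is continuous.\<close>
definition ext_rel :: "'a option topology \<Rightarrow> 'a option topology \<Rightarrow> bool" where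
  "ext_rel T1 T2 \<longleftrightarrow> continuous_map T1 T2 id"

definition plus_ext :: "'a topology \<Rightarrow> 'a option topology" where
  "plus_ext X = topology (\<lambda>U. U \<subseteq> pt_carrier X \<and> openin X (Some -` U))"

definition opc_ext :: "'a topology \<Rightarrow> 'a option topology" where
  "opc_ext X = topology (\<lambda>U. U \<subseteq> pt_carrier X \<and> openin X (Some -` U) \<and>
      (None \<in> U \<longrightarrow> compactin X (topspace X - Some -` U) \<and> closedin X (topspace X - Some -` U)))"

definition cgh_pullback :: "'b topology \<Rightarrow> 'c topology \<Rightarrow> ('b \<Rightarrow> 'd) \<Rightarrow> ('c \<Rightarrow> 'd) \<Rightarrow> ('b \<times> 'c) topology" where
  "cgh_pullback A B f g =
     kification (subtopology (prod_topology A B) {(a, b) \<in> topspace A \<times> topspace B. f a = g b})"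

definition ext_fibprod :: "'a option topology \<Rightarrow> 'a option topology \<Rightarrow> ('a option \<times> 'a option) topology" where
  "ext_fibprod T1 T2 = cgh_pullback T1 T2 id id"

definition neg_ext :: "'a topology \<Rightarrow> 'a option topology \<Rightarrow> 'a option topology" where
  "neg_ext X T = (THE T'. pointed_ext X T'
       \<and> homeomorphic_map (plus_ext X) (ext_fibprod T T') (\<lambda>p. (p, p))
       \<and> (\<forall>S. pointed_ext X S \<and> homeomorphic_map (plus_ext X) (ext_fibprod T S) (\<lambda>p. (p, p))
              \<longrightarrow> ext_rel S T'))"

definition cgh_pullback_square ::
  "'a topology \<Rightarrow> 'b topology \<Rightarrow> 'c topology \<Rightarrow> 'p topology
   \<Rightarrow> ('a \<Rightarrow> 'b) \<Rightarrow> ('a \<Rightarrow> 'c) \<Rightarrow> ('b \<Rightarrow> 'p) \<Rightarrow> ('c \<Rightarrow> 'p) \<Rightarrow> bool" where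
  "cgh_pullback_square A B1 B2 P i1 i2 j1 j2 \<longleftrightarrow>
     continuous_map A B1 i1 \<and> continuous_map A B2 i2 \<and>
     continuous_map B1 P j1 \<and> continuous_map B2 P j2 \<and>
     (\<forall>x\<in>topspace A. j1 (i1 x) = j2 (i2 x)) \<and>
     homeomorphic_map A (cgh_pullback B1 B2 j1 j2) (\<lambda>x. (i1 x, i2 x))"

text \<open>Test objects are CGH
  spaces whose points are sets of points of P (this suffices,
  since a CGH pushout of such a span is a quotient of the set-level pushout).\<close>
definition cgh_pushout_square ::
  "'a topology \<Rightarrow> 'b topology \<Rightarrow> 'c topology \<Rightarrow> 'p topology
   \<Rightarrow> ('a \<Rightarrow> 'b) \<Rightarrow> ('a \<Rightarrow> 'c) \<Rightarrow> ('b \<Rightarrow> 'p) \<Rightarrow> ('c \<Rightarrow> 'p) \<Rightarrow> bool" where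
  "cgh_pushout_square A B1 B2 P i1 i2 j1 j2 \<longleftrightarrow>
     continuous_map A B1 i1 \<and> continuous_map A B2 i2 \<and>
     continuous_map B1 P j1 \<and> continuous_map B2 P j2 \<and>
     (\<forall>x\<in>topspace A. j1 (i1 x) = j2 (i2 x)) \<and>
     (\<forall>(Z :: 'p set topology) f g.
        CGH_space Z \<and> continuous_map B1 Z f \<and> continuous_map B2 Z g \<and>
        (\<forall>x\<in>topspace A. f (i1 x) = g (i2 x)) \<longrightarrow>
        (\<exists>h. continuous_map P Z h \<and> (\<forall>y\<in>topspace B1. h (j1 y) = f y) \<and>
             (\<forall>y\<in>topspace B2. h (j2 y) = g y) \<and>
             (\<forall>h'. continuous_map P Z h' \<and> (\<forall>y\<in>topspace B1. h' (j1 y) = f y) \<and>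
                   (\<forall>y\<in>topspace B2. h' (j2 y) = g y) \<longrightarrow> (\<forall>z\<in>topspace P. h' z = h z))))"

end

theory Submission
  imports Defs
begin

text \<open>Call a set \<open>D \<subseteq> X\<close> base-compact for an extension \<open>T\<close> if \<open>D\<close> together with the
  basepoint is compact in \<open>T\<close>. For locally compact Hausdorff \<open>X\<close>, the diagonal
  \<open>X\<^sub>+ \<rightarrow> T \<times>\<^bsub>X\<^sup>+\<^esub> S\<close> is a homeomorphism iff every closed set that is base-compact for
  both \<open>T\<close> and \<open>S\<close> is compact, and \<open>T\<^sup>\<not>\<close> is the extension whose basepoint neighbourhoods
  are the complements of the closed \<open>T\<close>-base-compact sets. The pullback hypothesis says that
  closed sets base-compact for both \<open>T'\<close> and \<open>T''\<close> are compact; the pushout hypothesis says that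
  sets open in both \<open>T'\<close> and \<open>T''\<close> are open in \<open>X\<^sup>+\<close>. Together they show that a closed set
  is \<open>T''\<close>-base-compact iff it is \<open>T'\<^sup>\<not>\<close>-base-compact, whence \<open>T''\<^sup>\<not> = T'\<^sup>\<not>\<^sup>\<not>\<close>, and
  symmetrically.\<close>

lemma pt_carrier_vimage_subset: "U \<subseteq> pt_carrier X \<Longrightarrow> Some -` U \<subseteq> topspace X"
  unfolding pt_carrier_def by auto

lemma pt_carrier_eq_image: "U \<subseteq> pt_carrier X \<Longrightarrow> None \<notin> U \<Longrightarrow> U = Some ` (Some -` U)"
  unfolding pt_carrier_def by auto

lemma vimage_Some_pt_carrier [simp]: "Some -` pt_carrier X = topspace X"
  unfolding pt_carrier_def by auto

lemma pt_carrier_separation: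
  assumes H: "Hausdorff_space X"
    and image: "\<And>V. openin X V \<Longrightarrow> P (Some ` V)"
    and base: "\<And>x. x \<in> topspace X \<Longrightarrow> \<exists>U V. P U \<and> P V \<and> None \<in> U \<and> Some x \<in> V \<and> disjnt U V"
    and pq: "p \<in> pt_carrier X" "q \<in> pt_carrier X" "p \<noteq> q"
  shows "\<exists>U V. P U \<and> P V \<and> p \<in> U \<and> q \<in> V \<and> disjnt U V"
proof (cases p; cases q)
  fix y assume "p = None" "q = Some y"
  then show ?thesis using base pq by (auto simp: pt_carrier_def)
next
  fix x assume p: "p = Some x" and q: "q = None"
  then have "x \<in> topspace X" using pq by (auto simp: pt_carrier_def)
  then obtain U V where "P U" "P V" "None \<in> U" "Some x \<in> V" "disjnt U V" using base by blast
  then show ?thesis using p q disjnt_sym by blast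
next
  fix x y assume p: "p = Some x" and q: "q = Some y"
  then have "x \<in> topspace X" "y \<in> topspace X" "x \<noteq> y" using pq by (auto simp: pt_carrier_def)
  then obtain U V where UV: "openin X U" "openin X V" "x \<in> U" "y \<in> V" "disjnt U V"
    using H unfolding Hausdorff_space_def by blast
  have "disjnt (Some ` U) (Some ` V)" using UV(5) by (auto simp: disjnt_def)
  then show ?thesis using UV(1-4) p q image by blast
qed (use pq in simp)

locale Hausdorff_ext =
  fixes X :: "'a topology" and T :: "'a option topology"
  assumes topspace_eq: "topspace T = pt_carrier X"
    and Hausdorff: "Hausdorff_space T"
    and embedding_Some: "embedding_map X T Some"
begin

lemma openin_subset_pt_carrier: "openin T U \<Longrightarrow> U \<subseteq> pt_carrier X"
  using openin_subset topspace_eq by blast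

lemma continuous_Some: "continuous_map X T Some"
  using embedding_Some unfolding embedding_map_def
  using homeomorphic_imp_continuous_map continuous_map_in_subtopology by blast

lemma openin_vimage_Some:
  assumes "openin T U" shows "openin X (Some -` U)"
proof -
  have "{x \<in> topspace X. Some x \<in> U} = Some -` U"
    using pt_carrier_vimage_subset[OF openin_subset_pt_carrier[OF assms]] by auto
  then show ?thesis
    using openin_continuous_map_preimage[OF continuous_Some assms] by simp
qed

lemma closedin_vimage_Some:
  assumes "closedin T C" shows "closedin X (Some -` C)"
proof -
  have "{x \<in> topspace X. Some x \<in> C} = Some -` C"
    using pt_carrier_vimage_subset closedin_subset[OF assms] topspace_eq by blast
  then show ?thesis
    using closedin_continuous_map_preimage[OF continuous_Some assms] by simp
qed

lemma openin_image_Some: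
  assumes "openin X V" shows "openin T (Some ` V)"
proof -
  have h: "homeomorphic_map X (subtopology T (Some ` topspace X)) Some"
    using embedding_Some unfolding embedding_map_def .
  have "closedin T {None}"
    using Hausdorff topspace_eq by (simp add: pt_carrier_def closedin_Hausdorff_singleton)
  then have "openin T (topspace T - {None})" by auto
  moreover have "topspace T - {None} = Some ` topspace X"
    using topspace_eq unfolding pt_carrier_def by auto
  moreover have "openin (subtopology T (Some ` topspace X)) (Some ` V)"
    using homeomorphic_map_openness[OF h openin_subset[OF assms]] assms by simp
  ultimately show ?thesis using openin_trans_full by metis
qed

lemma compactin_image_Some_iff:
  assumes "D \<subseteq> topspace X" shows "compactin T (Some ` D) \<longleftrightarrow> compactin X D"
proof -
  have h: "homeomorphic_map X (subtopology T (Some ` topspace X)) Some"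
    using embedding_Some unfolding embedding_map_def .
  show ?thesis
    using homeomorphic_map_compactness[OF h assms] assms by (auto simp: compactin_subtopology)
qed

lemma compactin_closedin: "compactin T K \<Longrightarrow> closedin T K"
  using Hausdorff compactin_imp_closedin by blast

text \<open>Open sets of two extensions can be combined because away from the basepoint
  both carry the topology of \<open>X\<close>.\<close>

lemma openin_Un_ext:
  assumes S: "Hausdorff_ext X S" and "openin T U" "openin S V" "None \<in> U"
  shows "openin T (U \<union> V)"
proof -
  have "U \<union> V = U \<union> Some ` (Some -` V)"
    using \<open>None \<in> U\<close> by (auto simp: image_iff) (metis option.exhaust)
  then show ?thesis
    using openin_Un[OF assms(2) openin_image_Some[OF Hausdorff_ext.openin_vimage_Some[OF S assms(3)]]]
    by simp
qed

lemma openin_Int_ext: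
  assumes S: "Hausdorff_ext X S" and "openin T U" "openin S V" "None \<notin> V"
  shows "openin T (U \<inter> V)"
proof -
  have "U \<inter> V = U \<inter> Some ` (Some -` V)"
    using assms pt_carrier_eq_image Hausdorff_ext.openin_subset_pt_carrier[OF S] by blast
  show ?thesis
    unfolding \<open>U \<inter> V = _\<close>
    by (rule openin_Int[OF assms(2) openin_image_Some[OF Hausdorff_ext.openin_vimage_Some[OF S assms(3)]]])
qed

end

lemma pointed_ext_imp_Hausdorff_ext: "pointed_ext X T \<Longrightarrow> Hausdorff_ext X T"
  by (simp add: pointed_ext_def Hausdorff_ext_def CGH_space_def)

lemma pointed_ext_imp_k_space: "pointed_ext X T \<Longrightarrow> k_space T"
  by (simp add: pointed_ext_def CGH_space_def)

definition pointed_topology :: "'a topology \<Rightarrow> ('a set \<Rightarrow> bool) \<Rightarrow> 'a option topology" where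
  "pointed_topology X Q = topology (\<lambda>U. U \<subseteq> pt_carrier X \<and> openin X (Some -` U) \<and>
      (None \<in> U \<longrightarrow> Q (topspace X - Some -` U)))"

locale closed_ideal =
  fixes X :: "'a topology" and Q :: "'a set \<Rightarrow> bool"
  assumes Un: "\<And>A B. Q A \<Longrightarrow> Q B \<Longrightarrow> Q (A \<union> B)"
    and closed_subset: "\<And>A B. Q A \<Longrightarrow> closedin X B \<Longrightarrow> B \<subseteq> A \<Longrightarrow> Q B"
    and empty: "Q {}"
begin

lemma openin_pointed_topology:
  "openin (pointed_topology X Q) U \<longleftrightarrow>
      U \<subseteq> pt_carrier X \<and> openin X (Some -` U) \<and> (None \<in> U \<longrightarrow> Q (topspace X - Some -` U))"
proof -
  let ?L = "\<lambda>U. U \<subseteq> pt_carrier X \<and> openin X (Some -` U) \<and> (None \<in> U \<longrightarrow> Q (topspace X - Some -` U))"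
  have "?L (S \<inter> U)" if "?L S" "?L U" for S U
  proof -
    have "topspace X - Some -` (S \<inter> U) = (topspace X - Some -` S) \<union> (topspace X - Some -` U)"
      by blast
    then show ?thesis using that Un by auto
  qed
  moreover have "?L (\<Union>\<K>)" if \<K>: "\<forall>S\<in>\<K>. ?L S" for \<K>
  proof -
    have "Some -` \<Union>\<K> = (\<Union>S\<in>\<K>. Some -` S)" by auto
    then have open_vimage: "openin X (Some -` \<Union>\<K>)" using \<K> by auto
    have "Q (topspace X - Some -` \<Union>\<K>)" if None: "None \<in> \<Union>\<K>"
    proof -
      obtain S where "S \<in> \<K>" "None \<in> S" using None by blast
      then have "Q (topspace X - Some -` S)" using \<K> by blast
      moreover have "topspace X - Some -` \<Union>\<K> \<subseteq> topspace X - Some -` S" using \<open>S \<in> \<K>\<close> by blast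
      ultimately show ?thesis using closed_subset open_vimage by blast
    qed
    then show ?thesis using \<K> open_vimage by auto
  qed
  ultimately have "istopology ?L" unfolding istopology_def by blast
  then show ?thesis unfolding pointed_topology_def by (simp add: topology_inverse')
qed

lemma topspace_pointed_topology: "topspace (pointed_topology X Q) = pt_carrier X"
proof (rule subset_antisym)
  show "topspace (pointed_topology X Q) \<subseteq> pt_carrier X"
    using openin_pointed_topology[of "topspace (pointed_topology X Q)"] by simp
  show "pt_carrier X \<subseteq> topspace (pointed_topology X Q)"
    using openin_pointed_topology[of "pt_carrier X"] empty by (simp add: openin_subset)
qed

lemma openin_pointed_topology_image_Some: "openin X V \<Longrightarrow> openin (pointed_topology X Q) (Some ` V)"
  unfolding openin_pointed_topology pt_carrier_def using openin_subset by (auto simp: inj_vimage_image_eq)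

lemma embedding_pointed_topology: "embedding_map X (pointed_topology X Q) Some"
proof (rule injective_open_imp_embedding_map)
  show "continuous_map X (pointed_topology X Q) Some"
    unfolding continuous_map
  proof (intro conjI allI impI)
    show "Some ` topspace X \<subseteq> topspace (pointed_topology X Q)"
      unfolding topspace_pointed_topology pt_carrier_def by auto
    fix U assume "openin (pointed_topology X Q) U"
    then have "openin X (Some -` U)" "Some -` U \<subseteq> topspace X"
      unfolding openin_pointed_topology using pt_carrier_vimage_subset by auto
    then show "openin X {x \<in> topspace X. Some x \<in> U}" by (simp add: Int_absorb1 Collect_conj_eq vimage_def)
  qed
  show "open_map X (pointed_topology X Q) Some" unfolding open_map_def using openin_pointed_topology_image_Some by blast
qed simp

end

lemma plus_ext_eq: "plus_ext X = pointed_topology X (\<lambda>_. True)"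
  unfolding plus_ext_def pointed_topology_def by simp

lemma opc_ext_eq: "opc_ext X = pointed_topology X (\<lambda>K. compactin X K \<and> closedin X K)"
  unfolding opc_ext_def pointed_topology_def ..

interpretation plus_ext: closed_ideal X "\<lambda>_. True"
  by unfold_locales simp_all

interpretation opc_ext: closed_ideal X "\<lambda>K. compactin X K \<and> closedin X K"
  by unfold_locales (auto intro: compactin_Un closed_compactin)

lemma openin_plus_ext: "openin (plus_ext X) U \<longleftrightarrow> U \<subseteq> pt_carrier X \<and> openin X (Some -` U)"
  by (simp add: plus_ext_eq plus_ext.openin_pointed_topology)

lemma topspace_plus_ext: "topspace (plus_ext X) = pt_carrier X"
  by (simp add: plus_ext_eq plus_ext.topspace_pointed_topology)

lemma openin_opc_ext:
  "openin (opc_ext X) U \<longleftrightarrow> U \<subseteq> pt_carrier X \<and> openin X (Some -` U) \<and>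
     (None \<in> U \<longrightarrow> compactin X (topspace X - Some -` U) \<and> closedin X (topspace X - Some -` U))"
  by (simp add: opc_ext_eq opc_ext.openin_pointed_topology)

lemma topspace_opc_ext: "topspace (opc_ext X) = pt_carrier X"
  by (simp add: opc_ext_eq opc_ext.topspace_pointed_topology)

definition base_compact :: "'a topology \<Rightarrow> 'a option topology \<Rightarrow> 'a set \<Rightarrow> bool" where
  "base_compact X T D \<longleftrightarrow> (\<forall>U. openin T U \<longrightarrow> None \<in> U \<longrightarrow> compactin X (D - Some -` U))"

lemma base_compact_empty: "base_compact X T {}"
  unfolding base_compact_def by simp

lemma base_compact_Un: "base_compact X T A \<Longrightarrow> base_compact X T B \<Longrightarrow> base_compact X T (A \<union> B)"
  unfolding base_compact_def by (metis compactin_Un Un_Diff)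

lemma base_compact_Int_closedin: "base_compact X T A \<Longrightarrow> closedin X B \<Longrightarrow> base_compact X T (A \<inter> B)"
  unfolding base_compact_def by (metis compact_Int_closedin Int_Diff Int_commute)

context Hausdorff_ext
begin

lemma compactin_imp_base_compact:
  assumes "compactin X D" shows "base_compact X T D"
  unfolding base_compact_def
proof clarify
  fix U assume "openin T U" "None \<in> U"
  then have "closedin X (topspace X - Some -` U)" using openin_vimage_Some by blast
  then have "compactin X (D \<inter> (topspace X - Some -` U))" using compact_Int_closedin assms by blast
  moreover have "D \<inter> (topspace X - Some -` U) = D - Some -` U"
    using compactin_subset_topspace[OF assms] by blast
  ultimately show "compactin X (D - Some -` U)" by simp
qed

lemma compactin_imp_base_compact_vimage:
  assumes "compactin T K" shows "base_compact X T (Some -` K)"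
  unfolding base_compact_def
proof clarify
  fix U assume "openin T U" "None \<in> U"
  have K: "K \<subseteq> pt_carrier X" using compactin_subset_topspace[OF assms] topspace_eq by simp
  have "compactin T (K \<inter> (topspace T - U))"
    using compact_Int_closedin assms \<open>openin T U\<close> by blast
  moreover have "K \<inter> (topspace T - U) = Some ` (Some -` K - Some -` U)"
    using K \<open>None \<in> U\<close> topspace_eq unfolding pt_carrier_def by auto
  ultimately show "compactin X (Some -` K - Some -` U)"
    using compactin_image_Some_iff pt_carrier_vimage_subset[OF K] by (metis Diff_subset order_trans)
qed

lemma base_compact_iff_compactin:
  assumes "D \<subseteq> topspace X"
  shows "base_compact X T D \<longleftrightarrow> compactin T (insert None (Some ` D))"
proof
  assume "compactin T (insert None (Some ` D))"
  moreover have "Some -` insert None (Some ` D) = D" by auto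
  ultimately show "base_compact X T D"
    using compactin_imp_base_compact_vimage by metis
next
  assume D: "base_compact X T D"
  show "compactin T (insert None (Some ` D))"
    unfolding compactin_def
  proof (intro conjI allI impI)
    show "insert None (Some ` D) \<subseteq> topspace T"
      using assms topspace_eq unfolding pt_carrier_def by auto
    fix \<U> assume \<U>: "Ball \<U> (openin T) \<and> insert None (Some ` D) \<subseteq> \<Union>\<U>"
    then obtain U0 where U0: "U0 \<in> \<U>" "None \<in> U0" by auto
    then have "compactin T (Some ` (D - Some -` U0))"
      using D \<U> assms compactin_image_Some_iff unfolding base_compact_def by (metis Diff_subset order_trans)
    moreover have "Some ` (D - Some -` U0) \<subseteq> \<Union>\<U>" using \<U> by auto
    ultimately obtain \<F> where "finite \<F>" "\<F> \<subseteq> \<U>" "Some ` (D - Some -` U0) \<subseteq> \<Union>\<F>"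
      using \<U> unfolding compactin_def by meson
    then show "\<exists>\<F>. finite \<F> \<and> \<F> \<subseteq> \<U> \<and> insert None (Some ` D) \<subseteq> \<Union>\<F>"
      using U0 by (intro exI[of _ "insert U0 \<F>"]) auto
  qed
qed

lemma openin_iff_of_k_space:
  assumes "k_space T"
  shows "openin T U \<longleftrightarrow> U \<subseteq> pt_carrier X \<and> openin X (Some -` U) \<and>
     (None \<in> U \<longrightarrow> (\<forall>D. closedin X D \<and> base_compact X T D \<longrightarrow> compactin X (D - Some -` U)))"
proof
  assume "openin T U"
  then show "U \<subseteq> pt_carrier X \<and> openin X (Some -` U) \<and>
     (None \<in> U \<longrightarrow> (\<forall>D. closedin X D \<and> base_compact X T D \<longrightarrow> compactin X (D - Some -` U)))"
    using openin_subset_pt_carrier openin_vimage_Some unfolding base_compact_def by blast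
next
  assume U: "U \<subseteq> pt_carrier X \<and> openin X (Some -` U) \<and>
     (None \<in> U \<longrightarrow> (\<forall>D. closedin X D \<and> base_compact X T D \<longrightarrow> compactin X (D - Some -` U)))"
  show "openin T U"
  proof (cases "None \<in> U")
    case False
    then show ?thesis using U pt_carrier_eq_image openin_image_Some by metis
  next
    case True
    have "openin (subtopology T K) (K \<inter> U)" if K: "compactin T K" for K
    proof -
      have KX: "Some -` K \<subseteq> topspace X"
        using pt_carrier_vimage_subset compactin_subset_topspace[OF K] topspace_eq by metis
      have "closedin X (Some -` K)" "base_compact X T (Some -` K)"
        using closedin_vimage_Some compactin_closedin compactin_imp_base_compact_vimage K by auto
      then have "compactin T (Some ` (Some -` K - Some -` U))"
        using U True compactin_image_Some_iff KX by (metis Diff_subset order_trans)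
      moreover have "Some ` (Some -` K - Some -` U) = K - U"
        using True compactin_subset_topspace[OF K] topspace_eq unfolding pt_carrier_def by auto
      ultimately have "openin T (topspace T - (K - U))" using compactin_closedin by auto
      then have "openin (subtopology T K) (K \<inter> (topspace T - (K - U)))"
        by (rule openin_subtopology_Int2)
      moreover have "K \<inter> (topspace T - (K - U)) = K \<inter> U"
        using compactin_subset_topspace[OF K] by auto
      ultimately show ?thesis by simp
    qed
    then show ?thesis using assms U topspace_eq unfolding k_space_open by blast
  qed
qed

lemma continuous_map_id_base_compact:
  assumes S: "Hausdorff_ext X S" and D: "D \<subseteq> topspace X" "base_compact X S D"
  shows "continuous_map (subtopology T (insert None (Some ` D))) S id"
  unfolding continuous_map
proof (intro conjI allI impI)
  let ?C = "insert None (Some ` D)"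
  have C: "?C \<subseteq> pt_carrier X" using D unfolding pt_carrier_def by auto
  show "id ` topspace (subtopology T ?C) \<subseteq> topspace S"
    using topspace_eq Hausdorff_ext.topspace_eq[OF S] by auto
  fix V assume V: "openin S V"
  have "{x \<in> topspace (subtopology T ?C). id x \<in> V} = ?C \<inter> V"
    using topspace_eq C by auto
  moreover have "openin T (topspace T - Some ` (D - Some -` V))" if "None \<in> V"
  proof -
    have "compactin X (D - Some -` V)" using D V that unfolding base_compact_def by blast
    then show ?thesis using compactin_image_Some_iff compactin_closedin D by blast
  qed
  moreover have "?C \<inter> (topspace T - Some ` (D - Some -` V)) = ?C \<inter> V" if "None \<in> V"
    using that topspace_eq C by auto
  moreover have "openin T V" if "None \<notin> V"
    using that V pt_carrier_eq_image openin_image_Some Hausdorff_ext.openin_subset_pt_carrier[OF S]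
      Hausdorff_ext.openin_vimage_Some[OF S] by metis
  ultimately show "openin (subtopology T ?C) {x \<in> topspace (subtopology T ?C). id x \<in> V}"
    by (metis openin_subtopology_Int2)
qed

end

context
  fixes X :: "'a topology" and T S :: "'a option topology"
  assumes T: "Hausdorff_ext X T" and S: "Hausdorff_ext X S"
begin

interpretation T: Hausdorff_ext X T by (rule T)
interpretation S: Hausdorff_ext X S by (rule S)

abbreviation diagonal_subspace :: "('a option \<times> 'a option) topology" where
  "diagonal_subspace \<equiv> subtopology (prod_topology T S) ((\<lambda>p. (p, p)) ` pt_carrier X)"

lemma ext_fibprod_eq: "ext_fibprod T S = kification diagonal_subspace"
proof -
  have "{(a, b) \<in> topspace T \<times> topspace S. id a = id b} = (\<lambda>p. (p, p)) ` pt_carrier X"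
    using T.topspace_eq S.topspace_eq by auto
  then show ?thesis unfolding ext_fibprod_def cgh_pullback_def by simp
qed

lemma topspace_diagonal_subspace: "topspace diagonal_subspace = (\<lambda>p. (p, p)) ` pt_carrier X"
  using T.topspace_eq S.topspace_eq by auto

lemma Hausdorff_diagonal_subspace: "Hausdorff_space diagonal_subspace"
  using T.Hausdorff S.Hausdorff by (simp add: Hausdorff_space_subtopology Hausdorff_space_prod_topology)

lemma continuous_map_diagonal_Some: "continuous_map X diagonal_subspace (\<lambda>x. (Some x, Some x))"
  using T.continuous_Some S.continuous_Some
  by (auto simp: continuous_map_in_subtopology continuous_map_paired pt_carrier_def
      dest: continuous_map_image_subset_topspace)

lemma continuous_map_diagonal:
  assumes "k_space X" shows "continuous_map (plus_ext X) (ext_fibprod T S) (\<lambda>p. (p, p))"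
  unfolding continuous_map
proof (intro conjI allI impI)
  show "(\<lambda>p. (p, p)) ` topspace (plus_ext X) \<subseteq> topspace (ext_fibprod T S)"
    by (simp add: ext_fibprod_eq topspace_plus_ext topspace_diagonal_subspace del: topspace_subtopology)
  fix V assume "openin (ext_fibprod T S) V"
  then have "openin X {x \<in> topspace X. (Some x, Some x) \<in> V}"
    using openin_continuous_map_preimage continuous_map_diagonal_Some
      continuous_map_into_kification[OF assms] unfolding ext_fibprod_eq by blast
  moreover have "Some -` {p \<in> topspace (plus_ext X). (p, p) \<in> V} = {x \<in> topspace X. (Some x, Some x) \<in> V}"
    unfolding topspace_plus_ext pt_carrier_def by auto
  ultimately show "openin (plus_ext X) {p \<in> topspace (plus_ext X). (p, p) \<in> V}"
    unfolding openin_plus_ext topspace_plus_ext by auto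
qed

lemma openin_diagonal_image_Some:
  assumes "openin X V" shows "openin (ext_fibprod T S) ((\<lambda>p. (p, p)) ` Some ` V)"
proof -
  have "openin (prod_topology T S) (Some ` V \<times> Some ` V)"
    using T.openin_image_Some S.openin_image_Some assms by (simp add: openin_prod_Times_iff)
  then have "openin diagonal_subspace ((\<lambda>p. (p, p)) ` pt_carrier X \<inter> (Some ` V \<times> Some ` V))"
    by (simp add: openin_subtopology_Int2)
  moreover have "(\<lambda>p. (p, p)) ` pt_carrier X \<inter> (Some ` V \<times> Some ` V) = (\<lambda>p. (p, p)) ` Some ` V"
    using openin_subset[OF assms] unfolding pt_carrier_def by auto
  ultimately show ?thesis unfolding ext_fibprod_eq by (simp add: openin_kification_finer)
qed

lemma homeomorphic_map_diagonal_iff_openin_basepoint: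
  assumes "k_space X"
  shows "homeomorphic_map (plus_ext X) (ext_fibprod T S) (\<lambda>p. (p, p)) \<longleftrightarrow>
         openin (ext_fibprod T S) {(None, None)}"
proof
  assume "homeomorphic_map (plus_ext X) (ext_fibprod T S) (\<lambda>p. (p, p))"
  moreover have "openin (plus_ext X) {None}"
    unfolding openin_plus_ext pt_carrier_def by (simp add: vimage_def)
  ultimately show "openin (ext_fibprod T S) {(None, None)}"
    using homeomorphic_map_openness_eq by fastforce
next
  assume base: "openin (ext_fibprod T S) {(None, None)}"
  show "homeomorphic_map (plus_ext X) (ext_fibprod T S) (\<lambda>p. (p, p))"
  proof (rule bijective_open_imp_homeomorphic_map)
    show "continuous_map (plus_ext X) (ext_fibprod T S) (\<lambda>p. (p, p))"
      using continuous_map_diagonal[OF assms] .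
    show "(\<lambda>p. (p, p)) ` topspace (plus_ext X) = topspace (ext_fibprod T S)"
      by (simp add: ext_fibprod_eq topspace_plus_ext topspace_diagonal_subspace del: topspace_subtopology)
    show "open_map (plus_ext X) (ext_fibprod T S) (\<lambda>p. (p, p))"
      unfolding open_map_def
    proof clarify
      fix U assume "openin (plus_ext X) U"
      then have U: "U \<subseteq> pt_carrier X" "openin X (Some -` U)" by (auto simp: openin_plus_ext)
      have "(\<lambda>p. (p, p)) ` U = (\<lambda>p. (p, p)) ` Some ` (Some -` U) \<union> (if None \<in> U then {(None, None)} else {})"
        using U(1) unfolding pt_carrier_def by auto
      then show "openin (ext_fibprod T S) ((\<lambda>p. (p, p)) ` U)"
        using openin_Un[OF openin_diagonal_image_Some[OF U(2)] base] openin_diagonal_image_Some[OF U(2)]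
        by (auto split: if_splits)
    qed
  qed (simp add: inj_on_def)
qed

lemma compactin_if_openin_basepoint:
  assumes base: "openin (ext_fibprod T S) {(None, None)}"
    and D: "D \<subseteq> topspace X" "base_compact X T D" "base_compact X S D"
  shows "compactin X D"
proof -
  define C where "C = insert None (Some ` D)"
  have "compactin T C" unfolding C_def using T.base_compact_iff_compactin D by blast
  then have "compactin (subtopology T C) C" by (simp add: compactin_subtopology)
  moreover have "continuous_map (subtopology T C) diagonal_subspace (\<lambda>p. (p, p))"
    using T.continuous_map_id_base_compact[OF S D(1,3), unfolded id_def] D(1)
    unfolding C_def continuous_map_in_subtopology continuous_map_paired
    by (auto simp: pt_carrier_def)
  ultimately have "compactin (ext_fibprod T S) ((\<lambda>p. (p, p)) ` C)"
    unfolding ext_fibprod_eq compactin_kification by (rule image_compactin)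
  moreover have "closedin (ext_fibprod T S) (topspace (ext_fibprod T S) - {(None, None)})"
    using base by (rule closedin_diff[OF closedin_topspace])
  ultimately have "compactin (ext_fibprod T S) ((\<lambda>p. (p, p)) ` C \<inter> (topspace (ext_fibprod T S) - {(None, None)}))"
    by (rule compact_Int_closedin)
  moreover have "(\<lambda>p. (p, p)) ` C \<inter> (topspace (ext_fibprod T S) - {(None, None)}) = (\<lambda>x. (Some x, Some x)) ` D"
    using D(1) T.topspace_eq S.topspace_eq unfolding C_def ext_fibprod_eq pt_carrier_def by auto
  ultimately have "compactin (ext_fibprod T S) ((\<lambda>x. (Some x, Some x)) ` D)" by simp
  moreover have "continuous_map (ext_fibprod T S) T fst"
    unfolding ext_fibprod_eq
    by (intro continuous_map_from_kification continuous_map_subtopology_fst)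
  ultimately have "compactin T (fst ` (\<lambda>x. (Some x, Some x)) ` D)"
    by (rule image_compactin)
  then show ?thesis using T.compactin_image_Some_iff D(1) by (simp add: image_image)
qed

lemma openin_basepoint_if_compactin:
  assumes compact: "\<And>D. closedin X D \<Longrightarrow> base_compact X T D \<Longrightarrow> base_compact X S D \<Longrightarrow> compactin X D"
  shows "openin (ext_fibprod T S) {(None, None)}"
  unfolding ext_fibprod_eq openin_kification
proof (intro conjI allI impI)
  show "{(None, None)} \<subseteq> topspace diagonal_subspace"
    using T.topspace_eq S.topspace_eq by (auto simp: pt_carrier_def)
  fix K assume K: "compactin diagonal_subspace K"
  have K_diag: "K \<subseteq> (\<lambda>p. (p, p)) ` pt_carrier X"
    using compactin_subset_topspace[OF K] topspace_diagonal_subspace by simp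
  define D where "D = Some -` fst ` K"
  define E where "E = (\<lambda>x. (Some x, Some x)) ` D"
  have fst: "compactin T (fst ` K)"
    by (rule image_compactin[OF K continuous_map_subtopology_fst])
  have "compactin S (snd ` K)"
    by (rule image_compactin[OF K continuous_map_subtopology_snd])
  moreover have "snd ` K = fst ` K"
    using K_diag by (intro image_cong) auto
  ultimately have "closedin X D" "base_compact X T D" "base_compact X S D"
    unfolding D_def using T.closedin_vimage_Some[OF T.compactin_closedin[OF fst]]
      T.compactin_imp_base_compact_vimage[OF fst] S.compactin_imp_base_compact_vimage by simp_all
  then have "compactin diagonal_subspace E"
    unfolding E_def using compact image_compactin continuous_map_diagonal_Some by blast
  then have "openin diagonal_subspace (topspace diagonal_subspace - E)"
    using compactin_imp_closedin Hausdorff_diagonal_subspace by blast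
  then have open_K: "openin (subtopology diagonal_subspace K) (K \<inter> (topspace diagonal_subspace - E))"
    by (rule openin_subtopology_Int2)
  have "K - E \<subseteq> {(None, None)}"
  proof
    fix z assume z: "z \<in> K - E"
    then obtain p where p: "z = (p, p)" using K_diag by blast
    show "z \<in> {(None, None)}"
    proof (cases p)
      case (Some x)
      then have "x \<in> D" unfolding D_def using z p by force
      then show ?thesis using z p Some unfolding E_def by blast
    qed (simp add: p)
  qed
  moreover have "(None, None) \<notin> E" unfolding E_def by blast
  ultimately have "K \<inter> (topspace diagonal_subspace - E) = K \<inter> {(None, None)}"
    using compactin_subset_topspace[OF K] by blast
  with open_K show "openin (subtopology diagonal_subspace K) (K \<inter> {(None, None)})" by simp
qed

lemma homeomorphic_map_diagonal_iff_base_compact: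
  assumes "k_space X"
  shows "homeomorphic_map (plus_ext X) (ext_fibprod T S) (\<lambda>p. (p, p)) \<longleftrightarrow>
         (\<forall>D. closedin X D \<and> base_compact X T D \<and> base_compact X S D \<longrightarrow> compactin X D)"
proof
  assume "homeomorphic_map (plus_ext X) (ext_fibprod T S) (\<lambda>p. (p, p))"
  then have "openin (ext_fibprod T S) {(None, None)}"
    using homeomorphic_map_diagonal_iff_openin_basepoint[OF assms] by blast
  then show "\<forall>D. closedin X D \<and> base_compact X T D \<and> base_compact X S D \<longrightarrow> compactin X D"
    using compactin_if_openin_basepoint closedin_subset by blast
next
  assume "\<forall>D. closedin X D \<and> base_compact X T D \<and> base_compact X S D \<longrightarrow> compactin X D"
  then show "homeomorphic_map (plus_ext X) (ext_fibprod T S) (\<lambda>p. (p, p))"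
    using openin_basepoint_if_compactin homeomorphic_map_diagonal_iff_openin_basepoint[OF assms] by blast
qed

end

context closed_ideal
begin

lemma separation_basepoint:
  assumes lc: "locally_compact_space X" and H: "Hausdorff_space X"
    and compact: "\<And>K. compactin X K \<Longrightarrow> Q K" and x: "x \<in> topspace X"
  shows "\<exists>U V. openin (pointed_topology X Q) U \<and> openin (pointed_topology X Q) V \<and>
           None \<in> U \<and> Some x \<in> V \<and> disjnt U V"
proof -
  obtain V K where VK: "openin X V" "compactin X K" "x \<in> V" "V \<subseteq> K"
    using lc x unfolding locally_compact_space_def by blast
  have K: "closedin X K" using compactin_imp_closedin[OF H VK(2)] .
  have "Some -` (pt_carrier X - Some ` K) = topspace X - K" by (auto simp: pt_carrier_def)
  moreover have "topspace X - (topspace X - K) = K" using closedin_subset[OF K] by blast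
  ultimately have "openin (pointed_topology X Q) (pt_carrier X - Some ` K)"
    using K compact[OF VK(2)] unfolding openin_pointed_topology by (auto simp: pt_carrier_def)
  moreover have "openin (pointed_topology X Q) (Some ` V)"
    using openin_pointed_topology_image_Some[OF VK(1)] .
  moreover have "disjnt (pt_carrier X - Some ` K) (Some ` V)" using VK(4) by (auto simp: disjnt_def)
  moreover have "None \<in> pt_carrier X - Some ` K" "Some x \<in> Some ` V"
    using VK(3) by (auto simp: pt_carrier_def)
  ultimately show ?thesis by blast
qed

lemma Hausdorff_ext_pointed_topology:
  assumes lc: "locally_compact_space X" and H: "Hausdorff_space X"
    and compact: "\<And>K. compactin X K \<Longrightarrow> Q K"
  shows "Hausdorff_ext X (pointed_topology X Q)"
proof (unfold Hausdorff_ext_def, intro conjI)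
  show "Hausdorff_space (pointed_topology X Q)"
    unfolding Hausdorff_space_def topspace_pointed_topology
    using pt_carrier_separation[OF H openin_pointed_topology_image_Some separation_basepoint[OF lc H compact]]
    by blast
qed (simp_all add: topspace_pointed_topology embedding_pointed_topology)

end

lemma ext_rel_iff_openin:
  assumes "topspace S = topspace T"
  shows "ext_rel S T \<longleftrightarrow> (\<forall>U. openin T U \<longrightarrow> openin S U)"
proof -
  have "{x \<in> topspace S. id x \<in> U} = U" if "openin T U" for U
    using openin_subset[OF that] assms by auto
  then show ?thesis unfolding ext_rel_def continuous_map using assms by auto
qed

lemma ext_rel_antisym:
  assumes "ext_rel S T" "ext_rel T S" "topspace S = topspace T"
  shows "S = T"
  using assms ext_rel_iff_openin by (metis topology_eq)

definition neg_top :: "'a topology \<Rightarrow> 'a option topology \<Rightarrow> 'a option topology" where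
  "neg_top X T = pointed_topology X (base_compact X T)"

interpretation neg_top: closed_ideal X "base_compact X T"
proof
  show "base_compact X T B" if "base_compact X T A" "closedin X B" "B \<subseteq> A" for A B
    using base_compact_Int_closedin[OF that(1,2)] that(3) by (simp add: Int_absorb1)
qed (simp_all add: base_compact_Un base_compact_empty)

lemma openin_neg_top:
  "openin (neg_top X T) U \<longleftrightarrow>
     U \<subseteq> pt_carrier X \<and> openin X (Some -` U) \<and> (None \<in> U \<longrightarrow> base_compact X T (topspace X - Some -` U))"
  unfolding neg_top_def by (rule neg_top.openin_pointed_topology)

lemma topspace_neg_top: "topspace (neg_top X T) = pt_carrier X"
  unfolding neg_top_def by (rule neg_top.topspace_pointed_topology)

lemma openin_neg_top_complement:
  assumes "closedin X D" "base_compact X T D"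
  shows "openin (neg_top X T) (pt_carrier X - Some ` D)"
proof -
  have "Some -` (pt_carrier X - Some ` D) = topspace X - D" by (auto simp: pt_carrier_def)
  moreover have "topspace X - (topspace X - D) = D" using closedin_subset[OF assms(1)] by blast
  ultimately show ?thesis using assms unfolding openin_neg_top by auto
qed

context Hausdorff_ext
begin

lemma Hausdorff_ext_neg_top:
  assumes "locally_compact_space X" "Hausdorff_space X"
  shows "Hausdorff_ext X (neg_top X T)"
  unfolding neg_top_def
  using neg_top.Hausdorff_ext_pointed_topology assms compactin_imp_base_compact by blast

lemma base_compact_neg_top:
  assumes "openin T U" "None \<in> U"
  shows "base_compact X (neg_top X T) (topspace X - Some -` U)"
  unfolding base_compact_def
proof clarify
  fix V assume "openin (neg_top X T) V" "None \<in> V"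
  then have "compactin X (topspace X - Some -` V - Some -` U)"
    using assms unfolding openin_neg_top base_compact_def by blast
  then show "compactin X (topspace X - Some -` U - Some -` V)" by (simp add: Diff_eq Int_ac)
qed

lemma compactin_Diff_if_openin_kification:
  assumes "openin (kification T) U" "None \<in> U" "D \<subseteq> topspace X" "base_compact X T D"
  shows "compactin X (D - Some -` U)"
proof -
  define K where "K = insert None (Some ` D)"
  have K: "compactin T K" unfolding K_def using base_compact_iff_compactin assms(3,4) by blast
  then have "openin (subtopology T K) (K \<inter> U)" using assms(1) unfolding openin_kification by blast
  moreover have "topspace (subtopology T K) - (K - U) = K \<inter> U"
    using compactin_subset_topspace[OF K] by auto
  ultimately have "closedin (subtopology T K) (K - U)"
    using compactin_subset_topspace[OF K] by (auto simp: closedin_def)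
  then have "compactin T (K - U)"
    using closedin_compact_space compact_space_subtopology[OF K] compactin_subtopology by blast
  moreover have "K - U = Some ` (D - Some -` U)" unfolding K_def using assms(2) by auto
  ultimately show ?thesis using compactin_image_Some_iff assms(3) by (metis Diff_subset order_trans)
qed

lemma k_space_neg_top:
  assumes lc: "locally_compact_space X" and H: "Hausdorff_space X"
  shows "k_space (neg_top X T)"
proof -
  interpret N: Hausdorff_ext X "neg_top X T" using Hausdorff_ext_neg_top[OF lc H] .
  have "openin (neg_top X T) U" if U: "openin (kification (neg_top X T)) U" for U
  proof -
    have carrier: "U \<subseteq> pt_carrier X"
      using openin_subset[OF U] N.topspace_eq by simp
    have "continuous_map X (kification (neg_top X T)) Some"
      using N.continuous_Some continuous_map_into_kification[OF locally_compact_imp_k_space[OF lc]] by blast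
    then have "openin X {x \<in> topspace X. Some x \<in> U}"
      using openin_continuous_map_preimage U by blast
    moreover have "{x \<in> topspace X. Some x \<in> U} = Some -` U"
      using pt_carrier_vimage_subset[OF carrier] by auto
    ultimately have open_vimage: "openin X (Some -` U)" by simp
    have "base_compact X T (topspace X - Some -` U)" if "None \<in> U"
      unfolding base_compact_def
    proof clarify
      fix U0 assume "openin T U0" "None \<in> U0"
      then have "compactin X ((topspace X - Some -` U0) - Some -` U)"
        using N.compactin_Diff_if_openin_kification[OF U \<open>None \<in> U\<close>] base_compact_neg_top by blast
      then show "compactin X (topspace X - Some -` U - Some -` U0)"
        by (simp add: Diff_eq Int_ac)
    qed
    then show ?thesis using carrier open_vimage by (simp add: openin_neg_top)
  qed
  then show ?thesis unfolding k_space_open openin_kification by blast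
qed

lemma pointed_ext_neg_top:
  assumes "locally_compact_space X" "Hausdorff_space X"
  shows "pointed_ext X (neg_top X T)"
  using Hausdorff_ext_neg_top[OF assms] k_space_neg_top[OF assms]
  by (simp add: pointed_ext_def Hausdorff_ext_def CGH_space_def)

lemma homeomorphic_map_diagonal_neg_top:
  assumes lc: "locally_compact_space X" and H: "Hausdorff_space X"
  shows "homeomorphic_map (plus_ext X) (ext_fibprod T (neg_top X T)) (\<lambda>p. (p, p))"
proof -
  have "compactin X D" if "closedin X D" "base_compact X T D" "base_compact X (neg_top X T) D" for D
  proof -
    have "openin (neg_top X T) (pt_carrier X - Some ` D)" "None \<in> pt_carrier X - Some ` D"
      using openin_neg_top_complement that(1,2) by (auto simp: pt_carrier_def)
    then have "compactin X (D - Some -` (pt_carrier X - Some ` D))"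
      using that(3) unfolding base_compact_def by blast
    moreover have "D - Some -` (pt_carrier X - Some ` D) = D" by auto
    ultimately show ?thesis by simp
  qed
  then show ?thesis
    using homeomorphic_map_diagonal_iff_base_compact[OF Hausdorff_ext_axioms
        Hausdorff_ext_neg_top[OF lc H] locally_compact_imp_k_space[OF lc]]
    by blast
qed

lemma ext_rel_neg_top:
  assumes lc: "locally_compact_space X"
    and S: "pointed_ext X S"
    and diag: "homeomorphic_map (plus_ext X) (ext_fibprod T S) (\<lambda>p. (p, p))"
  shows "ext_rel S (neg_top X T)"
proof -
  interpret S: Hausdorff_ext X S using pointed_ext_imp_Hausdorff_ext[OF S] .
  have compact: "compactin X D" if "closedin X D" "base_compact X T D" "base_compact X S D" for D
    using homeomorphic_map_diagonal_iff_base_compact[OF Hausdorff_ext_axioms S.Hausdorff_ext_axioms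
        locally_compact_imp_k_space[OF lc]] diag that by blast
  have "openin S U" if U: "openin (neg_top X T) U" for U
    unfolding S.openin_iff_of_k_space[OF pointed_ext_imp_k_space[OF S]]
  proof (intro conjI impI allI)
    show "U \<subseteq> pt_carrier X" "openin X (Some -` U)" using U by (auto simp: openin_neg_top)
    fix D assume "None \<in> U" and D: "closedin X D \<and> base_compact X S D"
    define E where "E = topspace X - Some -` U"
    have "base_compact X T E" "closedin X E"
      using U \<open>None \<in> U\<close> unfolding openin_neg_top E_def by auto
    then have "compactin X (D \<inter> E)"
      using D compact base_compact_Int_closedin Int_commute closedin_Int by metis
    moreover have "D \<inter> E = D - Some -` U" unfolding E_def using closedin_subset D by blast
    ultimately show "compactin X (D - Some -` U)" by simp
  qed
  then show ?thesis
    by (simp add: ext_rel_iff_openin S.topspace_eq topspace_neg_top)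
qed

end

lemma neg_ext_eq_neg_top:
  assumes lc: "locally_compact_space X" and H: "Hausdorff_space X" and T: "Hausdorff_ext X T"
  shows "neg_ext X T = neg_top X T"
  unfolding neg_ext_def
proof (rule the_equality)
  interpret T: Hausdorff_ext X T by (rule T)
  show "pointed_ext X (neg_top X T) \<and>
      homeomorphic_map (plus_ext X) (ext_fibprod T (neg_top X T)) (\<lambda>p. (p, p)) \<and>
      (\<forall>S. pointed_ext X S \<and> homeomorphic_map (plus_ext X) (ext_fibprod T S) (\<lambda>p. (p, p))
           \<longrightarrow> ext_rel S (neg_top X T))"
    using T.pointed_ext_neg_top T.homeomorphic_map_diagonal_neg_top T.ext_rel_neg_top lc H by blast
  fix N assume N: "pointed_ext X N \<and>
      homeomorphic_map (plus_ext X) (ext_fibprod T N) (\<lambda>p. (p, p)) \<and>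
      (\<forall>S. pointed_ext X S \<and> homeomorphic_map (plus_ext X) (ext_fibprod T S) (\<lambda>p. (p, p))
           \<longrightarrow> ext_rel S N)"
  then have "ext_rel (neg_top X T) N" "ext_rel N (neg_top X T)"
    using T.pointed_ext_neg_top T.homeomorphic_map_diagonal_neg_top T.ext_rel_neg_top lc H by blast+
  moreover have "topspace N = topspace (neg_top X T)"
    using N by (simp add: pointed_ext_def topspace_neg_top)
  ultimately show "N = neg_top X T" using ext_rel_antisym by blast
qed

lemma common_separation_basepoint:
  assumes A: "Hausdorff_ext X A" and B: "Hausdorff_ext X B" and x: "x \<in> topspace X"
  shows "\<exists>U V. openin A U \<and> openin B U \<and> openin A V \<and> openin B V \<and>
           None \<in> U \<and> Some x \<in> V \<and> disjnt U V"
proof -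
  interpret A: Hausdorff_ext X A by (rule A)
  interpret B: Hausdorff_ext X B by (rule B)
  have "None \<in> pt_carrier X" "Some x \<in> pt_carrier X" "None \<noteq> Some x"
    using x by (auto simp: pt_carrier_def)
  then obtain UA VA UB VB
    where a: "openin A UA" "openin A VA" "None \<in> UA" "Some x \<in> VA" "disjnt UA VA"
      and b: "openin B UB" "openin B VB" "None \<in> UB" "Some x \<in> VB" "disjnt UB VB"
    using A.Hausdorff B.Hausdorff A.topspace_eq B.topspace_eq unfolding Hausdorff_space_def by metis
  have "None \<notin> VA" "None \<notin> VB" using a b by (auto simp: disjnt_def)
  then have "openin A (UA \<union> UB)" "openin B (UA \<union> UB)" "openin A (VA \<inter> VB)" "openin B (VA \<inter> VB)"
    using A.openin_Un_ext[OF B a(1) b(1) a(3)] B.openin_Un_ext[OF A b(1) a(1) b(3)]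
      A.openin_Int_ext[OF B a(2) b(2)] B.openin_Int_ext[OF A b(2) a(2)]
    by (simp_all add: Un_commute Int_commute)
  moreover have "disjnt (UA \<union> UB) (VA \<inter> VB)" using a(5) b(5) by (auto simp: disjnt_def)
  ultimately show ?thesis using a(3,4) b(4) by blast
qed

text \<open>The test spaces in \<open>cgh_pushout_square\<close> have sets of points as points, so the meet
  of two extensions is realised on singletons.\<close>

definition singleton_meet :: "'a option topology \<Rightarrow> 'a option topology \<Rightarrow> 'a option set topology" where
  "singleton_meet A B = topology (\<lambda>V. V \<subseteq> (\<lambda>p. {p}) ` topspace A \<and>
     openin A ((\<lambda>p. {p}) -` V) \<and> openin B ((\<lambda>p. {p}) -` V))"

lemma openin_singleton_meet:
  "openin (singleton_meet A B) V \<longleftrightarrow>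
     V \<subseteq> (\<lambda>p. {p}) ` topspace A \<and> openin A ((\<lambda>p. {p}) -` V) \<and> openin B ((\<lambda>p. {p}) -` V)"
proof -
  have "(\<lambda>p. {p}) -` \<Union>\<K> = (\<Union>V\<in>\<K>. (\<lambda>p. {p}) -` V)" for \<K> :: "'a option set set set" by auto
  then have "istopology (\<lambda>V. V \<subseteq> (\<lambda>p. {p}) ` topspace A \<and>
      openin A ((\<lambda>p. {p}) -` V) \<and> openin B ((\<lambda>p. {p}) -` V))"
    unfolding istopology_def by auto
  then show ?thesis unfolding singleton_meet_def by (simp add: topology_inverse')
qed

lemma openin_singleton_meet_image:
  assumes "openin A W" "openin B W"
  shows "openin (singleton_meet A B) ((\<lambda>p. {p}) ` W)"
proof -
  have "(\<lambda>p. {p}) -` ((\<lambda>p. {p}) ` W) = W" by auto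
  then show ?thesis using assms openin_subset by (fastforce simp: openin_singleton_meet)
qed

lemma continuous_map_singleton_meet:
  assumes "topspace C = topspace A" "topspace B = topspace A"
    and "\<And>W. openin A W \<Longrightarrow> openin B W \<Longrightarrow> openin C W"
  shows "continuous_map C (singleton_meet A B) (\<lambda>p. {p})"
  unfolding continuous_map
proof (intro conjI allI impI)
  have "openin (singleton_meet A B) ((\<lambda>p. {p}) ` topspace A)"
    using openin_singleton_meet_image openin_topspace assms(2) by metis
  then show "(\<lambda>p. {p}) ` topspace C \<subseteq> topspace (singleton_meet A B)"
    using assms(1) openin_subset by metis
  fix V assume "openin (singleton_meet A B) V"
  then have "V \<subseteq> (\<lambda>p. {p}) ` topspace A" "openin C ((\<lambda>p. {p}) -` V)"
    using assms(3) by (auto simp: openin_singleton_meet)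
  moreover have "{p \<in> topspace C. {p} \<in> V} = (\<lambda>p. {p}) -` V" using calculation(1) assms(1) by auto
  ultimately show "openin C {p \<in> topspace C. {p} \<in> V}" by simp
qed

lemma topspace_singleton_meet:
  assumes "topspace B = topspace A"
  shows "topspace (singleton_meet A B) = (\<lambda>p. {p}) ` topspace A"
proof (rule subset_antisym)
  show "topspace (singleton_meet A B) \<subseteq> (\<lambda>p. {p}) ` topspace A"
    using openin_singleton_meet[of A B "topspace (singleton_meet A B)"] by simp
  show "(\<lambda>p. {p}) ` topspace A \<subseteq> topspace (singleton_meet A B)"
    using openin_singleton_meet_image openin_topspace assms openin_subset by metis
qed

lemma Hausdorff_space_singleton_meet:
  assumes H: "Hausdorff_space X" and A: "Hausdorff_ext X A" and B: "Hausdorff_ext X B"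
  shows "Hausdorff_space (singleton_meet A B)"
  unfolding Hausdorff_space_def
proof clarify
  have "topspace (singleton_meet A B) = (\<lambda>p. {p}) ` pt_carrier X"
    using topspace_singleton_meet Hausdorff_ext.topspace_eq[OF A] Hausdorff_ext.topspace_eq[OF B] by metis
  moreover fix a b assume "a \<in> topspace (singleton_meet A B)" "b \<in> topspace (singleton_meet A B)" "a \<noteq> b"
  ultimately obtain p q where pq: "a = {p}" "b = {q}" "p \<in> pt_carrier X" "q \<in> pt_carrier X" "p \<noteq> q"
    by auto
  have "\<exists>U V. (openin A U \<and> openin B U) \<and> (openin A V \<and> openin B V) \<and> p \<in> U \<and> q \<in> V \<and> disjnt U V"
  proof (rule pt_carrier_separation[OF H _ _ pq(3-5)])
    show "openin A (Some ` V) \<and> openin B (Some ` V)" if "openin X V" for V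
      using Hausdorff_ext.openin_image_Some[OF A that] Hausdorff_ext.openin_image_Some[OF B that] ..
    show "\<exists>U V. (openin A U \<and> openin B U) \<and> (openin A V \<and> openin B V) \<and> None \<in> U \<and> Some x \<in> V \<and> disjnt U V"
      if "x \<in> topspace X" for x
      using common_separation_basepoint[OF A B that] by simp
  qed
  then obtain U V where UV: "openin A U" "openin B U" "openin A V" "openin B V" "p \<in> U" "q \<in> V" "disjnt U V"
    by blast
  have "disjnt ((\<lambda>p. {p}) ` U) ((\<lambda>p. {p}) ` V)" using UV(7) by (auto simp: disjnt_def)
  then show "\<exists>U V. openin (singleton_meet A B) U \<and> openin (singleton_meet A B) V \<and> a \<in> U \<and> b \<in> V \<and> disjnt U V"
    using openin_singleton_meet_image[OF UV(1,2)] openin_singleton_meet_image[OF UV(3,4)] UV(5,6) pq(1,2)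
    by blast
qed

lemma Hausdorff_space_kification: "Hausdorff_space Y \<Longrightarrow> Hausdorff_space (kification Y)"
  unfolding Hausdorff_space_def topspace_kification using openin_kification_finer by metis

text \<open>Mapping both extensions into the k-ification of their meet, the pushout property forces
  every set open in both to be open in the one-point compactification.\<close>

lemma openin_opc_ext_if_pushout:
  assumes H: "Hausdorff_space X" and A: "pointed_ext X A" and B: "pointed_ext X B"
    and pushout: "cgh_pushout_square (plus_ext X) A B (opc_ext X) id id id id"
    and U: "openin A U" "openin B U"
  shows "openin (opc_ext X) U"
proof -
  interpret A: Hausdorff_ext X A using pointed_ext_imp_Hausdorff_ext[OF A] .
  interpret B: Hausdorff_ext X B using pointed_ext_imp_Hausdorff_ext[OF B] .
  define Z where "Z = kification (singleton_meet A B)"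
  have "CGH_space Z"
    unfolding Z_def CGH_space_def
    using Hausdorff_space_kification[OF Hausdorff_space_singleton_meet[OF H A.Hausdorff_ext_axioms B.Hausdorff_ext_axioms]]
    by simp
  moreover have "continuous_map A (singleton_meet A B) (\<lambda>p. {p})"
    using A.topspace_eq B.topspace_eq by (intro continuous_map_singleton_meet) simp_all
  then have "continuous_map A Z (\<lambda>p. {p})"
    unfolding Z_def using continuous_map_into_kification[OF pointed_ext_imp_k_space[OF A]] by blast
  moreover have "continuous_map B (singleton_meet A B) (\<lambda>p. {p})"
    using A.topspace_eq B.topspace_eq by (intro continuous_map_singleton_meet) simp_all
  then have "continuous_map B Z (\<lambda>p. {p})"
    unfolding Z_def using continuous_map_into_kification[OF pointed_ext_imp_k_space[OF B]] by blast
  moreover note pushout[unfolded cgh_pushout_square_def, THEN conjunct2, THEN conjunct2,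
      THEN conjunct2, THEN conjunct2, THEN conjunct2, rule_format, of Z "\<lambda>p. {p}" "\<lambda>p. {p}"]
  ultimately obtain h where h: "continuous_map (opc_ext X) Z h" "\<forall>y\<in>topspace A. h (id y) = {y}"
    by auto
  have "openin Z ((\<lambda>p. {p}) ` U)"
    unfolding Z_def using openin_singleton_meet_image[OF U] by (rule openin_kification_finer)
  then have "openin (opc_ext X) {x \<in> topspace (opc_ext X). h x \<in> (\<lambda>p. {p}) ` U}"
    using openin_continuous_map_preimage[OF h(1)] by blast
  moreover have "{x \<in> topspace (opc_ext X). h x \<in> (\<lambda>p. {p}) ` U} = U"
    using h(2) A.openin_subset_pt_carrier[OF U(1)] unfolding topspace_opc_ext A.topspace_eq by auto
  ultimately show ?thesis by simp
qed

lemma base_compact_neg_top_if_compactin: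
  assumes compact: "\<And>D. closedin X D \<Longrightarrow> base_compact X A D \<Longrightarrow> base_compact X B D \<Longrightarrow> compactin X D"
    and E: "closedin X E" "base_compact X A E"
  shows "base_compact X (neg_top X B) E"
  unfolding base_compact_def
proof clarify
  fix U assume "openin (neg_top X B) U" "None \<in> U"
  then have F: "closedin X (topspace X - Some -` U)" "base_compact X B (topspace X - Some -` U)"
    by (auto simp: openin_neg_top)
  then have "compactin X (E \<inter> (topspace X - Some -` U))"
    using E compact base_compact_Int_closedin closedin_Int by (metis Int_commute)
  moreover have "E \<inter> (topspace X - Some -` U) = E - Some -` U" using closedin_subset[OF E(1)] by blast
  ultimately show "compactin X (E - Some -` U)" by simp
qed

text \<open>Enlarging an \<open>A\<close>-open set by \<open>X - E\<close> yields a \<open>B\<close>-open set, because the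
  closed \<open>B\<close>-base-compact sets meet \<open>E\<close> in compact sets.\<close>

lemma openin_Un_complement_if_neg_top:
  assumes A: "Hausdorff_ext X A" and B: "pointed_ext X B"
    and E: "closedin X E" "base_compact X (neg_top X B) E" and U0: "openin A U0"
  shows "openin B (U0 \<union> Some ` (topspace X - E))"
proof -
  interpret A: Hausdorff_ext X A by (rule A)
  interpret B: Hausdorff_ext X B using pointed_ext_imp_Hausdorff_ext[OF B] .
  have EX: "E \<subseteq> topspace X" using closedin_subset[OF E(1)] .
  define U where "U = U0 \<union> Some ` (topspace X - E)"
  have vimage_U: "Some -` U = Some -` U0 \<union> (topspace X - E)" unfolding U_def by auto
  have "U \<subseteq> pt_carrier X"
    unfolding U_def using A.openin_subset_pt_carrier[OF U0] by (auto simp: pt_carrier_def)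
  moreover have "openin X (Some -` U)"
    unfolding vimage_U using A.openin_vimage_Some[OF U0] E(1) by blast
  moreover have "compactin X (D - Some -` U)" if D: "closedin X D" "base_compact X B D" for D
  proof -
    have "openin (neg_top X B) (pt_carrier X - Some ` D)" "None \<in> pt_carrier X - Some ` D"
      using openin_neg_top_complement D by (auto simp: pt_carrier_def)
    then have "compactin X (E - Some -` (pt_carrier X - Some ` D))"
      using E(2) unfolding base_compact_def by blast
    moreover have "E - Some -` (pt_carrier X - Some ` D) = D \<inter> E" using EX by (auto simp: pt_carrier_def)
    ultimately have "compactin X (D \<inter> E)" by simp
    then have "compactin X (D \<inter> E \<inter> (topspace X - Some -` U0))"
      by (rule compact_Int_closedin[OF _ closedin_diff[OF closedin_topspace A.openin_vimage_Some[OF U0]]])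
    moreover have "D \<inter> E \<inter> (topspace X - Some -` U0) = D - Some -` U"
      unfolding vimage_U using EX closedin_subset[OF D(1)] by blast
    ultimately show ?thesis by simp
  qed
  ultimately show ?thesis
    unfolding U_def[symmetric] B.openin_iff_of_k_space[OF pointed_ext_imp_k_space[OF B]] by blast
qed

lemma base_compact_if_neg_top:
  assumes A: "pointed_ext X A" and B: "pointed_ext X B"
    and pushout: "\<And>U. openin A U \<Longrightarrow> openin B U \<Longrightarrow> openin (opc_ext X) U"
    and E: "closedin X E" "base_compact X (neg_top X B) E"
  shows "base_compact X A E"
  unfolding base_compact_def
proof clarify
  interpret A: Hausdorff_ext X A using pointed_ext_imp_Hausdorff_ext[OF A] .
  fix U0 assume U0: "openin A U0" "None \<in> U0"
  define U where "U = U0 \<union> Some ` (topspace X - E)"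
  have "openin A U"
    unfolding U_def using U0(1) A.openin_image_Some E(1) by (metis openin_Un openin_diff openin_topspace)
  moreover have "openin B U"
    unfolding U_def by (rule openin_Un_complement_if_neg_top[OF A.Hausdorff_ext_axioms B E U0(1)])
  ultimately have "openin (opc_ext X) U" by (rule pushout)
  moreover have "None \<in> U" unfolding U_def using U0 by blast
  ultimately have "compactin X (topspace X - Some -` U)" by (simp add: openin_opc_ext)
  moreover have "topspace X - Some -` U = E - Some -` U0"
    unfolding U_def using closedin_subset[OF E(1)] by auto
  ultimately show "compactin X (E - Some -` U0)" by simp
qed

lemma neg_top_eq_neg_top_neg_top:
  assumes A: "pointed_ext X A" and B: "pointed_ext X B"
    and compact: "\<And>D. closedin X D \<Longrightarrow> base_compact X A D \<Longrightarrow> base_compact X B D \<Longrightarrow> compactin X D"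
    and pushout: "\<And>U. openin A U \<Longrightarrow> openin B U \<Longrightarrow> openin (opc_ext X) U"
  shows "neg_top X A = neg_top X (neg_top X B)"
proof -
  have iff: "base_compact X A E \<longleftrightarrow> base_compact X (neg_top X B) E" if "closedin X E" for E
    using base_compact_neg_top_if_compactin[OF compact] base_compact_if_neg_top[OF A B pushout] that
    by blast
  show ?thesis
    unfolding topology_eq
  proof
    fix U
    show "openin (neg_top X A) U \<longleftrightarrow> openin (neg_top X (neg_top X B)) U"
    proof (cases "openin X (Some -` U)")
      case True
      then have "closedin X (topspace X - Some -` U)" by blast
      then show ?thesis using iff by (simp add: openin_neg_top)
    qed (simp add: openin_neg_top)
  qed
qed

theorem mainTheorem11:
  fixes X :: "'a topology" and T' T'' :: "'a option topology"
  assumes "locally_compact_space X" and "Hausdorff_space X"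
    and "pointed_ext X T'" and "pointed_ext X T''"
    and "cgh_pullback_square (plus_ext X) T'' T' (opc_ext X) id id id id"
    and "cgh_pushout_square (plus_ext X) T'' T' (opc_ext X) id id id id"
  shows "neg_ext X T'' = neg_ext X (neg_ext X T') \<and> neg_ext X T' = neg_ext X (neg_ext X T'')"
proof -
  note lc = assms(1) and H = assms(2)
  interpret T': Hausdorff_ext X T' using pointed_ext_imp_Hausdorff_ext[OF assms(3)] .
  interpret T'': Hausdorff_ext X T'' using pointed_ext_imp_Hausdorff_ext[OF assms(4)] .
  have compact: "compactin X D" if "closedin X D" "base_compact X T'' D" "base_compact X T' D" for D
    using assms(5) homeomorphic_map_diagonal_iff_base_compact[OF T''.Hausdorff_ext_axioms
        T'.Hausdorff_ext_axioms locally_compact_imp_k_space[OF lc]] that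
    by (simp add: cgh_pullback_square_def ext_fibprod_def)
  have pushout: "openin (opc_ext X) U" if "openin T'' U" "openin T' U" for U
    using openin_opc_ext_if_pushout[OF H assms(4,3,6)] that .
  have "neg_top X T'' = neg_top X (neg_top X T')"
    using neg_top_eq_neg_top_neg_top[OF assms(4,3)] compact pushout by blast
  moreover have "neg_top X T' = neg_top X (neg_top X T'')"
    using neg_top_eq_neg_top_neg_top[OF assms(3,4)] compact pushout by blast
  moreover have "neg_ext X T = neg_top X T" if "Hausdorff_ext X T" for T
    using neg_ext_eq_neg_top[OF lc H that] .
  ultimately show ?thesis
    using T'.Hausdorff_ext_neg_top T''.Hausdorff_ext_neg_top lc H
      T'.Hausdorff_ext_axioms T''.Hausdorff_ext_axioms by metis
qed

end
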